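(* Let $b\ge 2$ with $b\not\equiv 1\pmod 3$, and let $n\ge 2$. Then $$g(T_{b'}(n)) = 3b + \frac{b^{2n}(b^3+b^2-b-1) + b^{n}\{b^2(n+1)-(n+3)\}}{2}.$$
   Context: For integers $b\ge2$ with $b\not\equiv1\pmod3$, $n\ge0$, $i\ge0$ put $s'_i=(b+1)b^{n+i}+1$, and $T_{b'}(n)=\langle\{s'_i:i\in\mathbb{N}\}\rangle$ (submonoid of $(\mathbb{N},+)$ generated by them, a numerical semigroup). The genus $g(S)$ is the cardinality of $\mathbb{N}\setminus S$. *)

theory Defs
  imports Complex_Main
begin

inductive_set monoid_gen :: "nat set \<Rightarrow> nat set" for A :: "nat set" where
  zero: "0 \<in> monoid_gen A"
| add: "a \<in> A \<Longrightarrow> x \<in> monoid_gen A \<Longrightarrow> a + x \<in> monoid_gen A"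

definition genus :: "nat set \<Rightarrow> nat" where
  "genus S = card (UNIV - S)"

definition s' :: "nat \<Rightarrow> nat \<Rightarrow> nat \<Rightarrow> nat" where
  "s' b n i = (b + 1) * b ^ (n + i) + 1"

definition T' :: "nat \<Rightarrow> nat \<Rightarrow> nat set" where
  "T' b n = monoid_gen (range (s' b n))"

end

theory Submission
  imports Defs "HOL-Number_Theory.Cong"
begin

text \<open>Let \<open>L(N)\<close> be the sum of \<open>\<lfloor>N / b^j\<rfloor>\<close> over \<open>j \<ge> 1\<close> and \<open>m = (b+1) b^n + 1\<close>.
  Since \<open>(b-1) L(b^i) = b^i - 1\<close>, the generators are \<open>s'_i = m b^i - (b-1) L(b^i)\<close>. As \<open>L\<close> is
  superadditive and a pair \<open>t \<le> L(N)\<close> can be peeled off greedily along powers of \<open>b\<close>, an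
  integer \<open>x\<close> lies in the semigroup iff \<open>x + (b-1) t = m N\<close> for some \<open>N\<close> and \<open>t \<le> L(N)\<close>.
  When \<open>b - 1\<close> and \<open>m\<close> are coprime (here \<open>m \<equiv> 3 mod (b-1)\<close>, which is where \<open>b mod 3 \<noteq> 1\<close>
  enters) it suffices to test the unique \<open>t < m\<close>. Gaps therefore correspond to lattice points
  \<open>(N, t)\<close> with \<open>L(N) < t < m\<close> and \<open>(b-1) t \<le> m N\<close>. Counting them gives the sum of
  \<open>m - 1 - L(N)\<close> over all \<open>N\<close> with \<open>L(N) < m - 1\<close>, minus a reciprocity sum equal to
  \<open>b (m-1) / 2\<close>; the first sum is evaluated from the self-similarity \<open>L(bQ + d) = Q + L(Q)\<close>.\<close>

section \<open>Legendre sums\<close>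

text \<open>The recursion computes \<open>L(N)\<close>, i.e. \<open>N\<close> minus its base-\<open>b\<close> digit sum, divided by \<open>b - 1\<close>.\<close>

function legendre_sum :: "nat \<Rightarrow> nat \<Rightarrow> nat" where
  "legendre_sum b N = (if b < 2 \<or> N = 0 then 0 else N div b + legendre_sum b (N div b))"
  by pat_completeness auto
termination by (relation "measure (\<lambda>(b, N). N)") auto

declare legendre_sum.simps [simp del]

lemma legendre_sum_0 [simp]: "legendre_sum b 0 = 0"
  by (simp add: legendre_sum.simps)

lemma legendre_sum_eq:
  "b \<ge> 2 \<Longrightarrow> legendre_sum b N = N div b + legendre_sum b (N div b)"
  by (cases "N = 0") (auto simp: legendre_sum.simps)

lemma legendre_sum_mult_add:
  assumes "b \<ge> 2" "d < b"
  shows "legendre_sum b (b * Q + d) = Q + legendre_sum b Q"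
  using legendre_sum_eq[OF assms(1), of "b * Q + d"] assms by simp

lemma legendre_sum_less_base:
  assumes "b \<ge> 2" "N < b"
  shows "legendre_sum b N = 0"
  using legendre_sum_mult_add[OF assms, of 0] by simp

lemma legendre_sum_mono:
  assumes "b \<ge> 2" "N \<le> M"
  shows "legendre_sum b N \<le> legendre_sum b M"
  using assms(2)
proof (induction M arbitrary: N rule: less_induct)
  case (less M)
  show ?case
  proof (cases "M = 0")
    case False
    have "N div b \<le> M div b"
      using less.prems by (rule div_le_mono)
    moreover have "legendre_sum b (N div b) \<le> legendre_sum b (M div b)"
      using False assms(1) \<open>N div b \<le> M div b\<close> by (intro less.IH) auto
    ultimately show ?thesis
      using legendre_sum_eq[OF assms(1), of N] legendre_sum_eq[OF assms(1), of M] by linarith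
  qed (use less.prems in simp)
qed

lemma legendre_sum_superadditive:
  assumes "b \<ge> 2"
  shows "legendre_sum b N + legendre_sum b M \<le> legendre_sum b (N + M)"
proof (induction "N + M" arbitrary: N M rule: less_induct)
  case less
  show ?case
  proof (cases "N = 0 \<or> M = 0")
    case False
    have div_add: "N div b + M div b \<le> (N + M) div b"
      by (metis add.commute div_add1_eq le_add2)
    have "N div b < N"
      using False assms by simp
    then have "N div b + M div b < N + M"
      using div_le_dividend[of M b] by linarith
    then have "legendre_sum b (N div b) + legendre_sum b (M div b)
        \<le> legendre_sum b (N div b + M div b)"
      by (rule less.hyps)
    also have "\<dots> \<le> legendre_sum b ((N + M) div b)"
      using assms div_add by (rule legendre_sum_mono)
    finally show ?thesis
      using legendre_sum_eq[OF assms, of N] legendre_sum_eq[OF assms, of M]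
        legendre_sum_eq[OF assms, of "N + M"] div_add by linarith
  qed auto
qed

lemma legendre_sum_mult_le:
  assumes "b \<ge> 2"
  shows "c * legendre_sum b M \<le> legendre_sum b (c * M)"
proof (induction c)
  case (Suc c)
  then have "Suc c * legendre_sum b M \<le> legendre_sum b M + legendre_sum b (c * M)"
    by simp
  also have "\<dots> \<le> legendre_sum b (Suc c * M)"
    using legendre_sum_superadditive[OF assms, of M "c * M"] by simp
  finally show ?case .
qed simp

lemma legendre_sum_le:
  assumes "b \<ge> 2"
  shows "(b - 1) * legendre_sum b N \<le> N"
proof (induction N rule: less_induct)
  case (less N)
  show ?case
  proof (cases "N = 0")
    case False
    then have "(b - 1) * legendre_sum b (N div b) \<le> N div b"
      using assms by (intro less.IH) simp
    then have "(b - 1) * legendre_sum b N \<le> (b - 1) * (N div b) + N div b"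
      using legendre_sum_eq[OF assms, of N] by (simp add: algebra_simps)
    also have "\<dots> = b * (N div b)"
      using assms by (simp add: algebra_simps)
    also have "\<dots> \<le> N"
      by simp
    finally show ?thesis .
  qed simp
qed

lemma legendre_sum_le_self:
  assumes "b \<ge> 2"
  shows "legendre_sum b N \<le> N"
proof -
  have "1 * legendre_sum b N \<le> (b - 1) * legendre_sum b N"
    using assms by (intro mult_le_mono1) simp
  then show ?thesis
    using legendre_sum_le[OF assms, of N] by linarith
qed

lemma le_legendre_sum:
  assumes "b \<ge> 2"
  shows "N \<le> b * legendre_sum b N + (b - 1)"
proof -
  have "N div b \<le> legendre_sum b N"
    using legendre_sum_eq[OF assms, of N] by simp
  then have "b * (N div b) \<le> b * legendre_sum b N"
    by (rule mult_le_mono2)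
  moreover have "N mod b \<le> b - 1"
    using assms by (simp add: less_Suc_eq_le[symmetric])
  moreover have "b * (N div b) + N mod b = N"
    by simp
  ultimately show ?thesis
    by linarith
qed

lemma legendre_sum_power_Suc:
  assumes "b \<ge> 2"
  shows "legendre_sum b (b ^ Suc i) = b ^ i + legendre_sum b (b ^ i)"
  using legendre_sum_mult_add[OF assms, of 0 "b ^ i"] assms by simp

lemma legendre_sum_power:
  assumes "b \<ge> 2"
  shows "(b - 1) * legendre_sum b (b ^ i) + 1 = b ^ i"
proof (induction i)
  case 0
  show ?case
    using legendre_sum_less_base[OF assms, of 1] assms by simp
next
  case (Suc i)
  have "(b - 1) * legendre_sum b (b ^ Suc i) + 1
      = (b - 1) * b ^ i + ((b - 1) * legendre_sum b (b ^ i) + 1)"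
    using legendre_sum_power_Suc[OF assms, of i] by (simp add: algebra_simps)
  also have "\<dots> = b ^ Suc i"
    using Suc assms by (simp add: algebra_simps)
  finally show ?case .
qed

lemma legendre_sum_split_top_power:
  assumes "b \<ge> 2" "b ^ k \<le> N" "N < b ^ Suc k"
  shows "legendre_sum b N = legendre_sum b (N - b ^ k) + legendre_sum b (b ^ k)"
  using assms(2,3)
proof (induction k arbitrary: N)
  case 0
  then show ?case
    using legendre_sum_less_base[OF assms(1)] assms(1) by simp
next
  case (Suc k)
  define Q where "Q = N div b"
  define d where "d = N mod b"
  have N: "N = b * Q + d" and d: "d < b"
    using assms(1) by (simp_all add: Q_def d_def)
  have Q_lower: "b ^ k \<le> Q"
    using Suc.prems(1) assms(1) unfolding Q_def
    by (simp add: less_eq_div_iff_mult_less_eq mult.commute)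
  have Q_upper: "Q < b ^ Suc k"
    using Suc.prems(2) assms(1) unfolding Q_def
    by (simp add: less_mult_imp_div_less mult.commute)
  have "N - b ^ Suc k = b * (Q - b ^ k) + d"
    using N Q_lower by (simp add: algebra_simps diff_mult_distrib2)
  then show ?case
    using Suc.IH[OF Q_lower Q_upper] Q_lower N
      legendre_sum_mult_add[OF assms(1) d] legendre_sum_power_Suc[OF assms(1), of k] by simp
qed

lemma ex_crossing_index:
  fixes g :: "nat \<Rightarrow> nat"
  assumes "g 0 \<le> t" "t < g k"
  shows "\<exists>i<k. g i \<le> t \<and> t < g (Suc i)"
  using assms
proof (induction k)
  case (Suc k)
  then show ?case
    by (cases "t < g k") (auto intro: less_SucI)
qed simp

text \<open>Take the largest power \<open>b^k \<le> N\<close> if \<open>L(b^k) \<le> t\<close>; otherwise the \<open>b^i\<close> with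
  \<open>L(b^i) \<le> t < L(b^(i+1))\<close>, for which \<open>N - b^i \<ge> (b-1) b^i\<close> leaves enough room for \<open>t - L(b^i)\<close>.\<close>

lemma legendre_sum_peel_power:
  assumes "b \<ge> 2" "0 < N" "t \<le> legendre_sum b N"
  obtains i where "b ^ i \<le> N" "legendre_sum b (b ^ i) \<le> t"
    "t - legendre_sum b (b ^ i) \<le> legendre_sum b (N - b ^ i)"
proof -
  obtain k where k: "b ^ k \<le> N" "N < b ^ Suc k"
    using ex_power_ivl1[OF assms(1), of N] assms(2) by auto
  show ?thesis
  proof (cases "legendre_sum b (b ^ k) \<le> t")
    case True
    then show ?thesis
      using that[OF k(1) True] legendre_sum_split_top_power[OF assms(1) k] assms(3) by simp
  next
    case False
    have "legendre_sum b (b ^ 0) \<le> t"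
      using legendre_sum_less_base[OF assms(1), of 1] assms(1) by simp
    then obtain i where i: "i < k" "legendre_sum b (b ^ i) \<le> t"
      "t < legendre_sum b (b ^ Suc i)"
      using ex_crossing_index[of "\<lambda>i. legendre_sum b (b ^ i)" t k] False by auto
    have "b ^ Suc i \<le> b ^ k"
      using i(1) assms(1) by (intro power_increasing) auto
    then have "b ^ i + (b - 1) * b ^ i \<le> N"
      using k(1) assms(1) by (simp add: algebra_simps)
    then have bi: "b ^ i \<le> N" "(b - 1) * b ^ i \<le> N - b ^ i"
      by linarith+
    have "(b - 1) * legendre_sum b (b ^ i) \<le> legendre_sum b (N - b ^ i)"
      using legendre_sum_mult_le[OF assms(1)] legendre_sum_mono[OF assms(1) bi(2)]
      by (rule order_trans)
    moreover have "t < b ^ i + legendre_sum b (b ^ i)"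
      using i(3) legendre_sum_power_Suc[OF assms(1)] by simp
    ultimately have "t - legendre_sum b (b ^ i) \<le> legendre_sum b (N - b ^ i)"
      using legendre_sum_power[OF assms(1), of i] by linarith
    then show ?thesis
      using that bi(1) i(2) by blast
  qed
qed

section \<open>Semigroups generated by \<open>a b\<^sup>i + 1\<close>\<close>

definition geometric_semigroup :: "nat \<Rightarrow> nat \<Rightarrow> nat set" where
  "geometric_semigroup b a = monoid_gen (range (\<lambda>i. a * b ^ i + 1))"

lemma T'_eq_geometric_semigroup: "T' b n = geometric_semigroup b ((b + 1) * b ^ n)"
proof -
  have "s' b n = (\<lambda>i. (b + 1) * b ^ n * b ^ i + 1)"
    by (simp add: fun_eq_iff s'_def power_add algebra_simps)
  then show ?thesis
    unfolding T'_def geometric_semigroup_def by simp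
qed

lemma generator_add_legendre_sum:
  assumes "b \<ge> 2"
  shows "(a * b ^ i + 1) + (b - 1) * legendre_sum b (b ^ i) = (a + 1) * b ^ i"
  using legendre_sum_power[OF assms, of i] by (simp add: algebra_simps)

lemma geometric_semigroup_representation:
  assumes "b \<ge> 2" "x \<in> geometric_semigroup b a"
  obtains N t where "t \<le> legendre_sum b N" "x + (b - 1) * t = (a + 1) * N"
proof -
  from assms(2) have "\<exists>N t. t \<le> legendre_sum b N \<and> x + (b - 1) * t = (a + 1) * N"
    unfolding geometric_semigroup_def
  proof (induction rule: monoid_gen.induct)
    case zero
    show ?case
      by (intro exI[of _ 0]) simp
  next
    case (add y x)
    then obtain i N t where y: "y = a * b ^ i + 1"
      and t: "t \<le> legendre_sum b N" and x: "x + (b - 1) * t = (a + 1) * N"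
      by blast
    have "t + legendre_sum b (b ^ i) \<le> legendre_sum b (N + b ^ i)"
      using t legendre_sum_superadditive[OF assms(1), of N "b ^ i"] by linarith
    moreover have "y + x + (b - 1) * (t + legendre_sum b (b ^ i)) = (a + 1) * (N + b ^ i)"
      using x generator_add_legendre_sum[OF assms(1), of a i] y by (simp add: algebra_simps)
    ultimately show ?case
      by blast
  qed
  then show ?thesis
    using that by blast
qed

lemma representation_in_geometric_semigroup:
  assumes "b \<ge> 2" "t \<le> legendre_sum b N" "x + (b - 1) * t = (a + 1) * N"
  shows "x \<in> geometric_semigroup b a"
  using assms(2,3)
proof (induction N arbitrary: t x rule: less_induct)
  case (less N)
  show ?case
  proof (cases "N = 0")
    case True
    then show ?thesis
      using less.prems unfolding geometric_semigroup_def by (simp add: monoid_gen.zero)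
  next
    case False
    then obtain i where i: "b ^ i \<le> N" "legendre_sum b (b ^ i) \<le> t"
      "t - legendre_sum b (b ^ i) \<le> legendre_sum b (N - b ^ i)"
      using legendre_sum_peel_power[OF assms(1) _ less.prems(1)] by blast
    define t' where "t' = t - legendre_sum b (b ^ i)"
    define N' where "N' = N - b ^ i"
    have "N' < N"
      using i(1) False assms(1) unfolding N'_def by simp
    have "(b - 1) * t' \<le> (b - 1) * legendre_sum b N'"
      using i(3) unfolding t'_def N'_def by simp
    also have "\<dots> \<le> N'"
      by (rule legendre_sum_le[OF assms(1)])
    also have "\<dots> \<le> (a + 1) * N'"
      by simp
    finally have le: "(b - 1) * t' \<le> (a + 1) * N'" .
    have "t = t' + legendre_sum b (b ^ i)" "N = N' + b ^ i"
      using i(1,2) unfolding t'_def N'_def by simp_all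
    then have "x + (b - 1) * t' + (b - 1) * legendre_sum b (b ^ i) = (a + 1) * N' + (a + 1) * b ^ i"
      using less.prems(2) by (simp add: distrib_left add.assoc)
    then have x: "x = (a * b ^ i + 1) + ((a + 1) * N' - (b - 1) * t')"
      using generator_add_legendre_sum[OF assms(1), of a i] le by linarith
    have "(a + 1) * N' - (b - 1) * t' \<in> geometric_semigroup b a"
      using less.IH[OF \<open>N' < N\<close>, of t'] i(3) le unfolding t'_def N'_def by simp
    then show ?thesis
      unfolding x geometric_semigroup_def by (rule monoid_gen.add[OF rangeI])
  qed
qed

lemma coprime_ex_add_mult_eq_mult:
  fixes k m x :: nat
  assumes "coprime k m" "m > 0"
  obtains t N where "t < m" "x + k * t = m * N"
proof -
  obtain u where u: "[k * u = 1] (mod m)"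
    using cong_solve_coprime_nat[OF assms(1)] by auto
  define t where "t = (x * (m - 1) * u) mod m"
  have "[k * t = (k * u) * (x * (m - 1))] (mod m)"
    unfolding t_def by (simp add: cong_def mod_mult_right_eq ac_simps)
  also have "[(k * u) * (x * (m - 1)) = 1 * (x * (m - 1))] (mod m)"
    by (intro cong_mult u cong_refl)
  finally have "[x + k * t = x + x * (m - 1)] (mod m)"
    by (intro cong_add cong_refl) simp
  moreover have "x + x * (m - 1) = x * m"
    using assms(2) by (cases m) (auto simp: algebra_simps)
  ultimately have "m dvd x + k * t"
    by (simp add: cong_def mod_eq_0_iff_dvd)
  moreover have "t < m"
    unfolding t_def using assms(2) by simp
  ultimately show ?thesis
    using that by (auto elim!: dvdE)
qed

lemma coprime_add_mult_eq_mult_unique: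
  fixes k m x :: nat
  assumes "coprime k m" "x + k * t = m * N" "x + k * t' = m * N'" "t < m"
  shows "t' mod m = t"
proof -
  have "[x + k * t = x + k * t'] (mod m)"
    using assms(2,3) by (simp add: cong_def)
  then have "[t = t'] (mod m)"
    using cong_mult_lcancel_nat[OF assms(1)] by (simp add: cong_add_lcancel_nat)
  then show ?thesis
    using assms(4) by (simp add: cong_def)
qed

text \<open>A representation \<open>t' = t + (a+1) c\<close>, \<open>N' = N + (b-1) c\<close> with \<open>c > 0\<close> costs more than
  it gains: \<open>(b-1) t' \<le> N'\<close> and \<open>N \<le> b L(N) + b - 1\<close> force \<open>(b-1) a c < t \<le> a\<close>.\<close>

lemma legendre_sum_reduce_representation:
  assumes "b \<ge> 2" "t \<le> a" "t + (a + 1) * c \<le> legendre_sum b (N + (b - 1) * c)"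
  shows "t \<le> legendre_sum b N"
proof (cases "c = 0")
  case False
  show ?thesis
  proof (rule ccontr)
    assume "\<not> t \<le> legendre_sum b N"
    then obtain t0 where t0: "t = Suc t0" "legendre_sum b N \<le> t0"
      by (cases t) auto
    obtain B where B: "b = Suc B"
      using assms(1) by (cases b) auto
    have "b * legendre_sum b N + (b - 1) \<le> (b - 1) * t + (t - 1)"
      using mult_le_mono2[OF t0(2), of b] unfolding t0(1) B by (simp add: algebra_simps)
    then have "N \<le> (b - 1) * t + (t - 1)"
      using le_legendre_sum[OF assms(1), of N] by linarith
    moreover have "(b - 1) * (t + (a + 1) * c) \<le> N + (b - 1) * c"
      using mult_le_mono2[OF assms(3), of "b - 1"] legendre_sum_le[OF assms(1)] order_trans
      by blast
    ultimately have "(b - 1) * c * a \<le> t - 1"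
      by (simp add: algebra_simps)
    moreover have "1 \<le> (b - 1) * c"
      using assms(1) False by simp
    then have "a \<le> (b - 1) * c * a"
      by simp
    ultimately show False
      using assms(2) \<open>\<not> t \<le> legendre_sum b N\<close> by linarith
  qed
qed (use assms in simp)

lemma geometric_semigroup_mem_iff:
  assumes "b \<ge> 2" "coprime (b - 1) (a + 1)" "t \<le> a" "x + (b - 1) * t = (a + 1) * N"
  shows "x \<in> geometric_semigroup b a \<longleftrightarrow> t \<le> legendre_sum b N"
proof
  assume "x \<in> geometric_semigroup b a"
  then obtain N' t' where t': "t' \<le> legendre_sum b N'" "x + (b - 1) * t' = (a + 1) * N'"
    using geometric_semigroup_representation[OF assms(1)] by blast
  define c where "c = t' div (a + 1)"
  have "t' mod (a + 1) = t"
    using coprime_add_mult_eq_mult_unique[OF assms(2) assms(4) t'(2)] assms(3) by simp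
  then have t'_eq: "t' = t + (a + 1) * c"
    unfolding c_def by (metis mod_mult_div_eq add.commute mult.commute)
  have "(a + 1) * N' = x + (b - 1) * t + (b - 1) * ((a + 1) * c)"
    using t'(2) t'_eq by (simp add: distrib_left add.assoc)
  also have "\<dots> = (a + 1) * (N + (b - 1) * c)"
    using assms(4) by (simp add: distrib_left ac_simps)
  finally have "(a + 1) * N' = (a + 1) * (N + (b - 1) * c)" .
  then have "N' = N + (b - 1) * c"
    by (simp only: mult_cancel_left) simp
  then show "t \<le> legendre_sum b N"
    using legendre_sum_reduce_representation[OF assms(1,3)] t'(1) t'_eq by simp
qed (use representation_in_geometric_semigroup[OF assms(1) _ assms(4)] in blast)

section \<open>Counting the gaps\<close>

definition gap_pairs :: "nat \<Rightarrow> nat \<Rightarrow> (nat \<times> nat) set" where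
  "gap_pairs b a = {(N, t). t \<le> a \<and> (b - 1) * t \<le> (a + 1) * N \<and> legendre_sum b N < t}"

lemma bij_betw_gap_pairs:
  assumes "b \<ge> 2" "coprime (b - 1) (a + 1)"
  shows "bij_betw (\<lambda>(N, t). (a + 1) * N - (b - 1) * t) (gap_pairs b a)
    (UNIV - geometric_semigroup b a)"
proof (rule bij_betwI')
  fix p q
  assume "p \<in> gap_pairs b a" "q \<in> gap_pairs b a"
  then obtain N t N' t' where p: "p = (N, t)" "t \<le> a" "(b - 1) * t \<le> (a + 1) * N"
    and q: "q = (N', t')" "t' \<le> a" "(b - 1) * t' \<le> (a + 1) * N'"
    unfolding gap_pairs_def by auto
  show "((\<lambda>(N, t). (a + 1) * N - (b - 1) * t) p = (\<lambda>(N, t). (a + 1) * N - (b - 1) * t) q)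
    = (p = q)"
  proof
    assume "(\<lambda>(N, t). (a + 1) * N - (b - 1) * t) p = (\<lambda>(N, t). (a + 1) * N - (b - 1) * t) q"
    then have eq: "(a + 1) * N - (b - 1) * t = (a + 1) * N' - (b - 1) * t'"
      using p q by simp
    define x where "x = (a + 1) * N - (b - 1) * t"
    have "x + (b - 1) * t = (a + 1) * N" "x + (b - 1) * t' = (a + 1) * N'"
      using p q eq unfolding x_def by simp_all
    moreover from this have "t mod (a + 1) = t'"
      using coprime_add_mult_eq_mult_unique[OF assms(2)] q(2) by simp
    ultimately have "t = t'" "(a + 1) * N = (a + 1) * N'"
      using p(2) by simp_all
    moreover from this(2) have "N = N'"
      by (simp only: mult_cancel_left) simp
    ultimately show "p = q"
      using p(1) q(1) by simp
  qed simp
next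
  fix p
  assume "p \<in> gap_pairs b a"
  then obtain N t where p: "p = (N, t)" "t \<le> a" "(b - 1) * t \<le> (a + 1) * N"
    "legendre_sum b N < t"
    unfolding gap_pairs_def by auto
  then have "(a + 1) * N - (b - 1) * t \<notin> geometric_semigroup b a"
    using geometric_semigroup_mem_iff[OF assms p(2)] by simp
  then show "(\<lambda>(N, t). (a + 1) * N - (b - 1) * t) p \<in> UNIV - geometric_semigroup b a"
    using p(1) by simp
next
  fix x
  assume "x \<in> UNIV - geometric_semigroup b a"
  moreover obtain t N where t: "t < a + 1" "x + (b - 1) * t = (a + 1) * N"
    using coprime_ex_add_mult_eq_mult[OF assms(2)] by auto
  ultimately have "(N, t) \<in> gap_pairs b a"
    using geometric_semigroup_mem_iff[OF assms _ t(2)] unfolding gap_pairs_def by auto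
  then show "\<exists>p\<in>gap_pairs b a. x = (\<lambda>(N, t). (a + 1) * N - (b - 1) * t) p"
    using t(2) by force
qed

text \<open>The gap pairs are the points above the graph of \<open>L\<close> (\<open>E\<close>) minus the points above the
  line \<open>(b-1) t = (a+1) N\<close> (\<open>D\<close>); the latter lie above the graph because \<open>L(N) \<le> N\<close>.\<close>

lemma card_gap_pairs:
  assumes "b \<ge> 2" "b \<le> a + 2" "\<And>N. legendre_sum b N < a \<Longrightarrow> N < N1"
  shows "card (gap_pairs b a) + (\<Sum>N<b - 1. a - (a + 1) * N div (b - 1))
    = (\<Sum>N<N1. a - legendre_sum b N)"
proof -
  define E where "E = (SIGMA N:{..<N1}. {legendre_sum b N<..a})"
  define D where "D = (SIGMA N:{..<b - 1}. {(a + 1) * N div (b - 1)<..a})"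
  have b1: "b - 1 > 0"
    using assms(1) by simp
  have D_iff: "(N, t) \<in> D \<longleftrightarrow> t \<le> a \<and> (a + 1) * N < (b - 1) * t" for N t
  proof -
    have "N < b - 1" if "(a + 1) * N < (b - 1) * t" "t \<le> a"
    proof (rule ccontr)
      assume "\<not> N < b - 1"
      then have "(b - 1) * (a + 1) \<le> (a + 1) * N"
        using mult_le_mono2[of "b - 1" N "a + 1"] by (simp add: mult.commute)
      also have "\<dots> < (b - 1) * t"
        by (rule that(1))
      also have "\<dots> \<le> (b - 1) * a"
        using that(2) by simp
      also have "\<dots> < (b - 1) * (a + 1)"
        using b1 by simp
      finally have "(b - 1) * (a + 1) < (b - 1) * (a + 1)" .
      then show False
        by simp
    qed
    then show ?thesis
      unfolding D_def using div_less_iff_less_mult[OF b1] by (auto simp: mult.commute)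
  qed
  have E_iff: "(N, t) \<in> E \<longleftrightarrow> t \<le> a \<and> legendre_sum b N < t" for N t
    unfolding E_def using assms(3) by auto
  have "gap_pairs b a = E - D"
    unfolding gap_pairs_def using D_iff E_iff by auto
  moreover have "D \<subseteq> E"
  proof clarify
    fix N t
    assume "(N, t) \<in> D"
    then have "t \<le> a" "(a + 1) * N < (b - 1) * t"
      using D_iff by auto
    moreover have "(b - 1) * N \<le> (a + 1) * N"
      using assms(2) by (intro mult_le_mono1) simp
    ultimately have "N < t"
      by (meson le_less_trans mult_less_cancel1)
    then show "(N, t) \<in> E"
      using E_iff \<open>t \<le> a\<close> legendre_sum_le_self[OF assms(1), of N] by simp
  qed
  moreover have "finite E"
    unfolding E_def by simp
  moreover have "card E = (\<Sum>N<N1. a - legendre_sum b N)"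
    "card D = (\<Sum>N<b - 1. a - (a + 1) * N div (b - 1))"
    unfolding E_def D_def by (simp_all add: card_SigmaI)
  ultimately show ?thesis
    using card_Diff_subset[of D E] card_mono[of E D] finite_subset[of D E] by simp
qed

lemma not_dvd_mult_coprime:
  fixes k c N :: nat
  assumes "coprime k c" "0 < N" "N < k"
  shows "\<not> k dvd c * N"
  using assms coprime_dvd_mult_right_iff[OF assms(1)] by (auto dest: dvd_imp_le)

lemma mult_div_add_mult_div_complement:
  fixes a k N :: nat
  assumes "coprime k (a + 1)" "0 < N" "N < k"
  shows "(a + 1) * N div k + (a + 1) * (k - N) div k = a"
proof -
  define x y where "x = (a + 1) * N" and "y = (a + 1) * (k - N)"
  have sum: "x + y = (a + 1) * k"
    using assms(3) unfolding x_def y_def by (simp add: add_mult_distrib2[symmetric])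
  have "\<not> k dvd x" "\<not> k dvd y"
    unfolding x_def y_def using assms
    by (intro not_dvd_mult_coprime[OF assms(1)]; simp)+
  then have "0 < x mod k" "0 < y mod k"
    by (simp_all add: dvd_eq_mod_eq_0)
  moreover have "x mod k < k" "y mod k < k"
    using assms by simp_all
  moreover have "k dvd x mod k + y mod k"
    using sum by (simp add: dvd_eq_mod_eq_0 mod_add_eq)
  then obtain c where c: "x mod k + y mod k = k * c"
    by (rule dvdE)
  ultimately have "0 < k * c" "k * c < k * 2"
    by linarith+
  then have "x mod k + y mod k = k"
    using c by simp
  then have "(x + y) div k = x div k + y div k + 1"
    using assms(3) by (simp add: div_add1_eq)
  moreover have "(x + y) div k = a + 1"
    using sum assms(3) by simp
  ultimately show ?thesis
    unfolding x_def[symmetric] y_def[symmetric] by linarith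
qed

lemma sum_mult_div_coprime:
  fixes a k :: nat
  assumes "coprime k (a + 1)"
  shows "2 * (\<Sum>N<k. (a + 1) * N div k) = a * (k - 1)"
proof -
  define q where "q N = (a + 1) * N div k" for N
  have "(\<Sum>N<k. q N) = (\<Sum>N=1..<k. q N)"
    by (cases k) (simp_all add: q_def atLeast0LessThan[symmetric] sum.atLeast_Suc_lessThan)
  moreover have "(\<Sum>N=1..<k. q N) = (\<Sum>N=1..<k. q (k - N))"
    by (subst sum.atLeastLessThan_rev) simp
  moreover have "(\<Sum>N=1..<k. q N + q (k - N)) = (\<Sum>N=1..<k. a)"
    using mult_div_add_mult_div_complement[OF assms] unfolding q_def
    by (intro sum.cong) auto
  ultimately show ?thesis
    unfolding q_def[symmetric] by (simp add: sum.distrib mult.commute)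
qed

theorem genus_geometric_semigroup:
  assumes "b \<ge> 2" "b \<le> a + 2" "coprime (b - 1) (a + 1)"
    and "\<And>N. legendre_sum b N < a \<Longrightarrow> N < N1"
  shows "2 * genus (geometric_semigroup b a) + b * a = 2 * (\<Sum>N<N1. a - legendre_sum b N)"
proof -
  obtain B where B: "b = B + 2"
    using assms(1) le_Suc_ex by (metis add.commute)
  define q where "q N = (a + 1) * N div (b - 1)" for N
  have "q N < a + 1" if "N < b - 1" for N
    unfolding q_def using that by (intro less_mult_imp_div_less mult_less_mono2) simp_all
  then have "(\<Sum>N<b - 1. a - q N) + (\<Sum>N<b - 1. q N) = (\<Sum>N<b - 1. a)"
    by (simp add: sum.distrib[symmetric] less_Suc_eq_le)
  then have D: "(\<Sum>N<b - 1. a - q N) + (\<Sum>N<b - 1. q N) = B * a + a"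
    unfolding B by (simp add: algebra_simps)
  have "2 * (\<Sum>N<b - 1. q N) = a * (b - 2)"
    using sum_mult_div_coprime[OF assms(3)] unfolding q_def by (simp add: numeral_2_eq_2)
  then have Q: "2 * (\<Sum>N<b - 1. q N) = B * a"
    unfolding B by (simp add: mult.commute)
  have "genus (geometric_semigroup b a) = card (gap_pairs b a)"
    unfolding genus_def using bij_betw_same_card[OF bij_betw_gap_pairs[OF assms(1,3)]] by simp
  moreover have "b * a = B * a + 2 * a"
    unfolding B by (simp add: algebra_simps)
  ultimately show ?thesis
    using card_gap_pairs[OF assms(1,2,4)] D Q unfolding q_def[symmetric] by linarith
qed

section \<open>The semigroup \<open>T'\<^sub>b(n)\<close>\<close>

lemma coprime_pred_T'_modulus:
  fixes b n :: nat
  assumes "b \<ge> 2" "b mod 3 \<noteq> 1"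
  shows "coprime (b - 1) ((b + 1) * b ^ n + 1)"
proof -
  have "[b = 1] (mod (b - 1))"
    using assms(1) by (simp add: cong_def mod_if le_diff_conv2 Suc_diff_Suc)
  then have "[(b + 1) * b ^ n + 1 = (1 + 1) * 1 ^ n + 1] (mod (b - 1))"
    by (intro cong_add cong_mult cong_pow cong_refl)
  then have cong: "[(b + 1) * b ^ n + 1 = 3] (mod (b - 1))"
    by (simp add: numeral_3_eq_3)
  have "\<not> 3 dvd b - 1"
    using assms by presburger
  then have "coprime 3 (b - 1)"
    by (intro prime_imp_coprime) auto
  then have "coprime (b - 1) 3"
    by (simp add: coprime_commute)
  then show ?thesis
    using coprime_cong_cong_right[OF cong] by simp
qed

lemma sum_lessThan_add:
  "(\<Sum>N<m + c. g N) = (\<Sum>N<m. g N) + (\<Sum>d<c. (g :: nat \<Rightarrow> 'a :: comm_monoid_add) (m + d))"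
  by (induction c) (simp_all add: add.assoc)

lemma sum_lessThan_mult_blocks:
  "(\<Sum>N<b * K. g N) = (\<Sum>Q<K. \<Sum>d<b. (g :: nat \<Rightarrow> 'a :: comm_monoid_add) (b * Q + d))"
proof (induction K)
  case (Suc K)
  show ?case
    using Suc sum_lessThan_add[of g "b * K" b] by (simp add: add.commute)
qed simp

lemma sum_legendre_sum_mult_base:
  assumes "b \<ge> 2"
  shows "(\<Sum>N<b * K. legendre_sum b N) = b * ((\<Sum>Q<K. Q) + (\<Sum>Q<K. legendre_sum b Q))"
proof -
  have "(\<Sum>N<b * K. legendre_sum b N) = (\<Sum>Q<K. \<Sum>d<b. Q + legendre_sum b Q)"
    unfolding sum_lessThan_mult_blocks
    using legendre_sum_mult_add[OF assms] by (intro sum.cong) simp_all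
  then show ?thesis
    by (simp add: sum.distrib sum_distrib_left distrib_left)
qed

lemma two_sum_lessThan_add: "2 * (\<Sum>Q<K. Q) + K = K * (K :: nat)"
  by (induction K) (simp_all add: algebra_simps)

lemma legendre_sum_square_pred:
  assumes "b \<ge> 2"
  shows "legendre_sum b (b * b - 1) = b - 1"
proof -
  have "b * b - 1 = b * (b - 1) + (b - 1)"
    using assms by (cases b) (simp_all add: algebra_simps)
  then show ?thesis
    using assms legendre_sum_mult_add[OF assms, of "b - 1" "b - 1"]
      legendre_sum_less_base[OF assms, of "b - 1"] by simp
qed

lemma legendre_sum_power_mult_square_pred:
  assumes "b \<ge> 2"
  shows "legendre_sum b (b ^ k * (b * b - 1)) + 2 = (b + 1) * b ^ k"
proof (induction k)
  case 0
  then show ?case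
    using legendre_sum_square_pred[OF assms] assms by simp
next
  case (Suc k)
  have "legendre_sum b (b ^ Suc k * (b * b - 1))
      = b ^ k * (b * b - 1) + legendre_sum b (b ^ k * (b * b - 1))"
    using legendre_sum_mult_add[OF assms, of 0 "b ^ k * (b * b - 1)"] assms
    by (simp add: mult.assoc)
  moreover have "b ^ k * (b * b - 1) + (b + 1) * b ^ k = (b + 1) * b ^ Suc k"
    using assms by (cases b) (simp_all add: algebra_simps)
  ultimately show ?case
    using Suc by simp
qed

lemma sum_legendre_sum_power_mult_square_pred:
  assumes "b \<ge> 2"
  shows "2 * real (\<Sum>N<b ^ k * (b * b - 1). legendre_sum b N)
    = (real b - 1) * (real b + 1)^2 * (real b ^ k)^2 - (real b^2 - 1) * real k * real b ^ k
      - (real b - 1) * (2 * real b + 3) * real b ^ k"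
proof (induction k)
  case 0
  obtain B where B: "b = Suc B"
    using assms by (cases b) auto
  define G where "G = (\<Sum>N<b * b - 1. legendre_sum b N)"
  define S where "S = (\<Sum>Q<b. Q)"
  have "(\<Sum>N<b * b. legendre_sum b N) = b * S"
    using sum_legendre_sum_mult_base[OF assms, of b] legendre_sum_less_base[OF assms]
    unfolding S_def by simp
  moreover have "(\<Sum>N<b * b. legendre_sum b N) = G + B"
    using legendre_sum_square_pred[OF assms] unfolding G_def B by simp
  ultimately have "2 * G + 2 * B = b * (2 * S)"
    by simp
  moreover have "b * (2 * S + b) = b * (b * b)"
    using two_sum_lessThan_add[of b] unfolding S_def by simp
  then have "b * (2 * S) + b * b = b * (b * b)"
    by (simp only: distrib_left)
  ultimately have "2 * G + 2 * B + b * b = b * (b * b)"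
    by linarith
  then have "real (2 * G + 2 * B + b * b) = real (b * (b * b))"
    by (rule arg_cong)
  then have "2 * real G + 2 * real B + real b * real b = real b * (real b * real b)"
    by simp
  then show ?case
    unfolding G_def by (simp add: B algebra_simps power2_eq_square)
next
  case (Suc k)
  define K where "K = b ^ k * (b * b - 1)"
  define S where "S = (\<Sum>Q<K. Q)"
  define H where "H = (\<Sum>Q<K. legendre_sum b Q)"
  have K: "real K = real b ^ k * (real b ^ 2 - 1)"
    unfolding K_def using assms by (simp add: of_nat_diff power2_eq_square)
  have "real (2 * S + K) = real (K * K)"
    unfolding S_def by (rule arg_cong[OF two_sum_lessThan_add])
  then have S: "2 * real S = real K * real K - real K"
    by simp
  have "(\<Sum>N<b ^ Suc k * (b * b - 1). legendre_sum b N) = b * (S + H)"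
    using sum_legendre_sum_mult_base[OF assms, of K] unfolding K_def S_def H_def
    by (simp add: mult.assoc)
  then have step: "2 * real (\<Sum>N<b ^ Suc k * (b * b - 1). legendre_sum b N)
      = real b * (2 * real S + 2 * real H)"
    by (simp add: algebra_simps)
  have IH: "2 * real H = (real b - 1) * (real b + 1)^2 * (real b ^ k)^2
      - (real b^2 - 1) * real k * real b ^ k - (real b - 1) * (2 * real b + 3) * real b ^ k"
    using Suc unfolding K_def[symmetric] H_def[symmetric] .
  show ?case
    unfolding step S IH K by (simp add: algebra_simps power2_eq_square)
qed

lemma legendre_sum_add_power_mult_square_pred:
  assumes "b \<ge> 2" "n \<ge> 2" "j < 2 * b"
  shows "legendre_sum b (b ^ n * (b * b - 1) + j) = legendre_sum b (b ^ n * (b * b - 1)) + j div b"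
proof -
  obtain m where m: "n = Suc (Suc m)"
    using assms(2) by (metis add_2_eq_Suc le_Suc_ex)
  define Q where "Q = b ^ m * (b * b - 1)"
  have Q: "b ^ n * (b * b - 1) = b * (b * Q)"
    unfolding Q_def m by (simp add: mult.assoc)
  have "j < b * b"
    using assms(1,3) mult_le_mono1[of 2 b b] by linarith
  then have "j div b < b"
    using assms(1) by (simp add: div_less_iff_less_mult)
  have "b ^ n * (b * b - 1) + j = b * (b * Q + j div b) + j mod b"
    unfolding Q by (simp add: algebra_simps)
  then have "legendre_sum b (b ^ n * (b * b - 1) + j) = b * Q + j div b + Q + legendre_sum b Q"
    using legendre_sum_mult_add[OF assms(1)] \<open>j div b < b\<close> assms(1) by simp
  moreover have "legendre_sum b (b ^ n * (b * b - 1)) = b * Q + Q + legendre_sum b Q"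
    using legendre_sum_mult_add[OF assms(1), of 0] assms(1) unfolding Q by simp
  ultimately show ?thesis
    by simp
qed

lemma legendre_sum_less_imp_less:
  assumes "b \<ge> 2" "legendre_sum b N < (b + 1) * b ^ n"
  shows "N < b ^ n * (b * b - 1) + 2 * b"
proof (rule ccontr)
  assume "\<not> N < b ^ n * (b * b - 1) + 2 * b"
  then have "legendre_sum b (b ^ n * (b * b - 1)) + legendre_sum b (b * 2)
      \<le> legendre_sum b N"
    using legendre_sum_superadditive[OF assms(1)] legendre_sum_mono[OF assms(1)]
    by (metis mult.commute not_less order_trans)
  moreover have "legendre_sum b (b * 2) \<ge> 2"
    using legendre_sum_mult_add[OF assms(1), of 0 2] assms(1) by simp
  ultimately show False
    using legendre_sum_power_mult_square_pred[OF assms(1), of n] assms(2) by linarith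
qed

lemma sum_deficit_legendre_sum:
  assumes "b \<ge> 2" "n \<ge> 2"
  defines "N0 \<equiv> b ^ n * (b * b - 1)" and "a \<equiv> (b + 1) * b ^ n"
  shows "real (\<Sum>N<N0 + 2 * b. a - legendre_sum b N)
    = 3 * real b + real N0 * real a - real (\<Sum>N<N0. legendre_sum b N)"
proof -
  have L_N0: "legendre_sum b N0 + 2 = a"
    unfolding N0_def a_def by (rule legendre_sum_power_mult_square_pred[OF assms(1)])
  have "legendre_sum b N \<le> a" if "N < N0" for N
    using legendre_sum_mono[OF assms(1), of N N0] that L_N0 by simp
  then have "real (\<Sum>N<N0. a - legendre_sum b N) = (\<Sum>N<N0. real a - real (legendre_sum b N))"
    by (simp add: of_nat_diff)
  then have head: "real (\<Sum>N<N0. a - legendre_sum b N)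
      = real N0 * real a - real (\<Sum>N<N0. legendre_sum b N)"
    by (simp add: sum_subtractf)
  have "(\<Sum>j<b * 2. a - legendre_sum b (N0 + j)) = (\<Sum>j<b * 2. 2 - j div b)"
    using legendre_sum_add_power_mult_square_pred[OF assms(1,2)] L_N0 unfolding N0_def
    by (intro sum.cong) (auto simp: mult.commute)
  also have "\<dots> = (\<Sum>Q<2. \<Sum>d<b. 2 - Q)"
    unfolding sum_lessThan_mult_blocks using assms(1) by (intro sum.cong) simp_all
  also have "\<dots> = 3 * b"
    by (simp add: numeral_2_eq_2)
  finally have tail: "(\<Sum>j<2 * b. a - legendre_sum b (N0 + j)) = 3 * b"
    by (simp add: mult.commute)
  show ?thesis
    unfolding sum_lessThan_add of_nat_add head tail by simp
qed

theorem mainTheorem14: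
  fixes b n :: nat
  assumes "b \<ge> 2" and "b mod 3 \<noteq> 1" and "n \<ge> 2"
  shows "real (genus (T' b n)) =
    3 * real b + (real b ^ (2 * n) * (real b ^ 3 + real b ^ 2 - real b - 1)
      + real b ^ n * (real b ^ 2 * (real n + 1) - (real n + 3))) / 2"
proof -
  define a N0 where "a = (b + 1) * b ^ n" and "N0 = b ^ n * (b * b - 1)"
  define E G where "E = (\<Sum>N<N0 + 2 * b. a - legendre_sum b N)"
    and "G = (\<Sum>N<N0. legendre_sum b N)"
  have "b * 1 \<le> (b + 1) * b ^ n"
    using assms(1) by (intro mult_le_mono) simp_all
  then have "b \<le> a + 2"
    unfolding a_def by linarith
  then have "2 * genus (T' b n) + b * a = 2 * E"
    unfolding T'_eq_geometric_semigroup E_def a_def N0_def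
    using assms(1) coprime_pred_T'_modulus[OF assms(1,2)] legendre_sum_less_imp_less[OF assms(1)]
    by (intro genus_geometric_semigroup) (simp_all add: a_def)
  then have "2 * real (genus (T' b n)) + real b * real a = 2 * real E"
    by (metis of_nat_add of_nat_mult of_nat_numeral)
  moreover have "real E = 3 * real b + real N0 * real a - real G"
    unfolding E_def G_def a_def N0_def by (rule sum_deficit_legendre_sum[OF assms(1,3)])
  ultimately have "real (genus (T' b n)) = 3 * real b + real N0 * real a - real G - real b * real a / 2"
    by linarith
  moreover have "2 * real G = (real b - 1) * (real b + 1)^2 * (real b ^ n)^2
      - (real b^2 - 1) * real n * real b ^ n - (real b - 1) * (2 * real b + 3) * real b ^ n"
    unfolding G_def N0_def by (rule sum_legendre_sum_power_mult_square_pred[OF assms(1)])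
  moreover have "real N0 = real b ^ n * (real b ^ 2 - 1)"
    unfolding N0_def using assms(1) by (simp add: of_nat_diff power2_eq_square)
  moreover have "real a = (real b + 1) * real b ^ n"
    unfolding a_def by (simp add: algebra_simps)
  ultimately show ?thesis
    by (simp add: power_mult power2_eq_square power3_eq_cube field_simps)
qed

end
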